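(* Let $G$ be a complete $s$-partite graph ($s\ge 2$), and suppose exactly $r$ of its parts consist of a single vertex. Then $\chi_1(G)=s-r+\left\lceil \frac{r}{2}\right\rceil$.
   Context: A map $f:V(G)\to\{1,\dots,k\}$ is a $1$-relaxed $k$-coloring if every vertex $u$ has at most one neighbor $v$ with $f(v)=f(u)$; $\chi_1(G)$ is the minimum $k$ for which such a coloring exists. *)

theory Defs
  imports Complex_Main
begin

definition relaxed1_coloring ::
  "'a set \<Rightarrow> ('a \<Rightarrow> 'a \<Rightarrow> bool) \<Rightarrow> nat \<Rightarrow> ('a \<Rightarrow> nat) \<Rightarrow> bool" where
  "relaxed1_coloring V E k f \<longleftrightarrow>
     (\<forall>v\<in>V. f v \<in> {1..k}) \<and>
     (\<forall>u\<in>V. \<forall>v\<in>V. \<forall>w\<in>V.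
        E u v \<and> E u w \<and> f v = f u \<and> f w = f u \<longrightarrow> v = w)"

definition chi1 :: "'a set \<Rightarrow> ('a \<Rightarrow> 'a \<Rightarrow> bool) \<Rightarrow> nat" where
  "chi1 V E = (LEAST k. \<exists>f. relaxed1_coloring V E k f)"

definition complete_multipartite ::
  "'a set \<Rightarrow> ('a \<Rightarrow> 'a \<Rightarrow> bool) \<Rightarrow> 'a set set \<Rightarrow> bool" where
  "complete_multipartite V E P \<longleftrightarrow>
     \<Union>P = V \<and> (\<forall>A\<in>P. A \<noteq> {}) \<and> pairwise disjnt P \<and>
     (\<forall>u v. E u v \<longleftrightarrow> (\<exists>A\<in>P. \<exists>B\<in>P. A \<noteq> B \<and> u \<in> A \<and> v \<in> B))"

end

theory Submission
  imports Defs
begin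

text \<open>In a 1-relaxed coloring of a complete multipartite graph, a color occurring in two
  different parts is carried by exactly two vertices, one in each of them. So a part with at
  least two vertices needs either a color of its own or two shared colors, and a singleton part
  needs at least one color. Every color can pay 2 in total to the parts it meets, whence
  2k \<ge> 2(s - r) + r. Conversely, one color per non-singleton part together with one color per
  pair of singleton parts is a 1-relaxed coloring.\<close>

lemma complete_multipartite_part_unique:
  assumes "complete_multipartite V E P" "A \<in> P" "B \<in> P" "v \<in> A" "v \<in> B"
  shows "A = B"
  using assms unfolding complete_multipartite_def pairwise_def disjnt_iff by blast

lemma complete_multipartite_adj:
  assumes "complete_multipartite V E P" "A \<in> P" "B \<in> P" "A \<noteq> B" "u \<in> A" "v \<in> B"
  shows "E u v"
  using assms unfolding complete_multipartite_def by blast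

lemma complete_multipartite_adjE:
  assumes "complete_multipartite V E P" "E u v"
  obtains A B where "A \<in> P" "B \<in> P" "A \<noteq> B" "u \<in> A" "v \<in> B"
  using assms unfolding complete_multipartite_def by blast

lemma complete_multipartite_part_subset:
  assumes "complete_multipartite V E P" "A \<in> P"
  shows "A \<subseteq> V"
  using assms unfolding complete_multipartite_def by blast

lemma complete_multipartite_partE:
  assumes "complete_multipartite V E P" "v \<in> V"
  obtains A where "A \<in> P" "v \<in> A"
  using assms unfolding complete_multipartite_def by blast

lemma complete_multipartite_part_nonempty:
  assumes "complete_multipartite V E P" "A \<in> P"
  shows "A \<noteq> {}"
  using assms unfolding complete_multipartite_def by blast

lemma complete_multipartite_finite_parts:
  assumes "finite V" "complete_multipartite V E P"
  shows "finite P"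
  using assms unfolding complete_multipartite_def by (auto intro: finite_UnionD)

lemma complete_multipartite_finite_part:
  assumes "finite V" "complete_multipartite V E P" "A \<in> P"
  shows "finite A"
  using assms complete_multipartite_part_subset rev_finite_subset by metis

lemma complete_multipartite_the_part:
  assumes "complete_multipartite V E P" "A \<in> P" "v \<in> A"
  shows "(THE A. A \<in> P \<and> v \<in> A) = A"
  using assms complete_multipartite_part_unique[OF assms(1)] by (intro the_equality) blast+

lemma sum_if_one_two_add_card:
  assumes "finite X"
  shows "(\<Sum>x\<in>X. if Q x then 1 else 2) + card {x \<in> X. Q x} = 2 * card X"
proof -
  have "card {x \<in> X. Q x} = (\<Sum>x\<in>X. if Q x then 1 else 0)"
    using sum.inter_filter[OF assms, of "\<lambda>_. 1 :: nat" Q] by simp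
  then have "(\<Sum>x\<in>X. if Q x then 1 else 2) + card {x \<in> X. Q x} =
      (\<Sum>x\<in>X. (if Q x then 1 else 2) + (if Q x then 1 else 0))"
    by (simp add: sum.distrib)
  also have "\<dots> = (\<Sum>x\<in>X. 2)" by (intro sum.cong) simp_all
  finally show ?thesis by simp
qed

text \<open>Each color distributes a budget of 2 over the parts it meets: 1 to each part if it
  also occurs outside that part (then it meets exactly two parts), else 2 to its only part.\<close>

definition color_weight :: "'a set \<Rightarrow> ('a \<Rightarrow> nat) \<Rightarrow> nat \<Rightarrow> 'a set \<Rightarrow> nat" where
  "color_weight V f c A = (if c \<in> f ` (V - A) then 1 else 2)"

lemma relaxed1_coloring_same_color_neighbors:
  assumes "relaxed1_coloring V E k f" "x \<in> V" "y \<in> V" "z \<in> V" "E x y" "E x z"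
    and "f y = f x" "f z = f x"
  shows "y = z"
  using assms unfolding relaxed1_coloring_def by blast

lemma relaxed1_coloring_in_range:
  assumes "relaxed1_coloring V E k f" "v \<in> V"
  shows "f v \<in> {1..k}"
  using assms unfolding relaxed1_coloring_def by blast

context
  fixes V :: "'a set" and E :: "'a \<Rightarrow> 'a \<Rightarrow> bool" and P :: "'a set set"
    and k :: nat and f :: "'a \<Rightarrow> nat"
  assumes finite_V: "finite V"
    and multipartite: "complete_multipartite V E P"
    and coloring: "relaxed1_coloring V E k f"
begin

lemma same_color_across_parts:
  assumes A: "A \<in> P" "u \<in> A" and B: "B \<in> P" "v \<in> B" and "A \<noteq> B" "f v = f u"
    and "w \<in> V" "f w = f u"
  shows "w = u \<or> w = v"
proof -
  note neighbors = relaxed1_coloring_same_color_neighbors[OF coloring]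
  have "u \<in> V" "v \<in> V"
    using A B complete_multipartite_part_subset[OF multipartite] by blast+
  obtain D where "D \<in> P" "w \<in> D" using complete_multipartite_partE[OF multipartite \<open>w \<in> V\<close>] .
  show ?thesis
  proof (cases "D = A")
    case True
    have "E v w" "E v u"
      using complete_multipartite_adj[OF multipartite] A B \<open>A \<noteq> B\<close> \<open>w \<in> D\<close> True by metis+
    then have "w = u" using neighbors[of v w u] assms \<open>u \<in> V\<close> \<open>v \<in> V\<close> by argo
    then show ?thesis ..
  next
    case False
    have "E u w" "E u v"
      using complete_multipartite_adj[OF multipartite] A B \<open>A \<noteq> B\<close> \<open>D \<in> P\<close> \<open>w \<in> D\<close> False
      by metis+
    then have "w = v" using neighbors[of u w v] assms \<open>u \<in> V\<close> \<open>v \<in> V\<close> by argo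
    then show ?thesis ..
  qed
qed

lemma parts_of_shared_color:
  assumes A: "A \<in> P" "u \<in> A" and B: "B \<in> P" "v \<in> B" and "A \<noteq> B" "f u = c" "f v = c"
  shows "{A. A \<in> P \<and> c \<in> f ` A} = {A, B}"
proof -
  have "D \<in> {A, B}" if "D \<in> P" "c \<in> f ` D" for D
  proof -
    obtain w where "w \<in> D" "f w = c" using \<open>c \<in> f ` D\<close> by auto
    have "w \<in> V" using complete_multipartite_part_subset[OF multipartite \<open>D \<in> P\<close>] \<open>w \<in> D\<close> by blast
    then have "w = u \<or> w = v"
      using same_color_across_parts[OF A B \<open>A \<noteq> B\<close>] \<open>f u = c\<close> \<open>f v = c\<close> \<open>f w = c\<close> by simp
    then show ?thesis
      using complete_multipartite_part_unique[OF multipartite] A B \<open>D \<in> P\<close> \<open>w \<in> D\<close> by blast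
  qed
  moreover have "c \<in> f ` A" "c \<in> f ` B"
    using rev_image_eqI A(2) B(2) \<open>f u = c\<close> \<open>f v = c\<close> by metis+
  ultimately show ?thesis
    using A(1) B(1) by (intro equalityI subsetI) auto
qed

lemma color_weight_sum_le: "(\<Sum>A | A \<in> P \<and> c \<in> f ` A. color_weight V f c A) \<le> 2"
proof (cases "\<exists>A\<in>P. \<exists>B\<in>P. \<exists>u\<in>A. \<exists>v\<in>B. A \<noteq> B \<and> f u = c \<and> f v = c")
  case True
  then obtain A B u v where A: "A \<in> P" "u \<in> A" and B: "B \<in> P" "v \<in> B"
    and "A \<noteq> B" "f u = c" "f v = c"
    by blast
  have "u \<in> V" "v \<in> V"
    using A B complete_multipartite_part_subset[OF multipartite] by blast+
  have "u \<notin> B" "v \<notin> A"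
    using complete_multipartite_part_unique[OF multipartite] A B \<open>A \<noteq> B\<close> by blast+
  have "v \<in> V - A" "u \<in> V - B"
    using \<open>u \<in> V\<close> \<open>v \<in> V\<close> \<open>u \<notin> B\<close> \<open>v \<notin> A\<close> by simp_all
  then have "c \<in> f ` (V - A)" "c \<in> f ` (V - B)"
    using rev_image_eqI \<open>f u = c\<close> \<open>f v = c\<close> by metis+
  then have "color_weight V f c A = 1" "color_weight V f c B = 1"
    by (simp_all add: color_weight_def)
  with parts_of_shared_color[OF A B \<open>A \<noteq> B\<close> \<open>f u = c\<close> \<open>f v = c\<close>] \<open>A \<noteq> B\<close>
  show ?thesis by simp
next
  case False
  then have same_part: "D = A"
    if "A \<in> P" "D \<in> P" and colored: "c \<in> f ` A" "c \<in> f ` D" for A D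
  proof -
    obtain u v where "u \<in> A" "f u = c" "v \<in> D" "f v = c" using colored by auto
    then show ?thesis using False that(1,2) by blast
  qed
  show ?thesis
  proof (cases "{A. A \<in> P \<and> c \<in> f ` A} = {}")
    case False
    then obtain A where "A \<in> P" "c \<in> f ` A" by blast
    then have "{A. A \<in> P \<and> c \<in> f ` A} = {A}" using same_part by blast
    then show ?thesis by (simp add: color_weight_def)
  next
    case True
    show ?thesis unfolding True by simp
  qed
qed

lemma color_weight_monochromatic_part:
  assumes "A \<in> P" "f ` A = {c}" "card A \<noteq> 1"
  shows "color_weight V f c A = 2"
proof (rule ccontr)
  assume "color_weight V f c A \<noteq> 2"
  then obtain v where v: "v \<in> V" "v \<notin> A" "f v = c"
    by (auto simp: color_weight_def split: if_splits)
  obtain B where B: "B \<in> P" "v \<in> B" using complete_multipartite_partE[OF multipartite \<open>v \<in> V\<close>] .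
  have "finite A" "A \<noteq> {}"
    using complete_multipartite_finite_part[OF finite_V multipartite assms(1)]
      complete_multipartite_part_nonempty[OF multipartite assms(1)] .
  then have "\<not> card A \<le> Suc 0" using \<open>card A \<noteq> 1\<close> by (simp add: le_Suc_eq)
  then obtain a1 a2 where "a1 \<in> A" "a2 \<in> A" "a1 \<noteq> a2"
    using \<open>finite A\<close> card_le_Suc0_iff_eq by blast
  have "a2 \<in> V" using complete_multipartite_part_subset[OF multipartite assms(1)] \<open>a2 \<in> A\<close> by blast
  have "f a1 = c" "f a2 = c" using \<open>a1 \<in> A\<close> \<open>a2 \<in> A\<close> \<open>f ` A = {c}\<close> by blast+
  have "B \<noteq> A" using B v by blast
  then have "a2 = v \<or> a2 = a1"
    using same_color_across_parts[OF B assms(1) \<open>a1 \<in> A\<close>] v \<open>a2 \<in> V\<close> \<open>f a1 = c\<close> \<open>f a2 = c\<close>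
    by simp
  then show False using \<open>a2 \<in> A\<close> \<open>v \<notin> A\<close> \<open>a1 \<noteq> a2\<close> by blast
qed

lemma color_weight_sum_ge:
  assumes "A \<in> P"
  shows "(if card A = 1 then 1 else 2) \<le> (\<Sum>c\<in>f ` A. color_weight V f c A)"
proof -
  have "finite A" "A \<noteq> {}"
    using complete_multipartite_finite_part[OF finite_V multipartite assms]
      complete_multipartite_part_nonempty[OF multipartite assms] .
  have "(\<Sum>c\<in>f ` A. 1) \<le> (\<Sum>c\<in>f ` A. color_weight V f c A)"
    by (rule sum_mono) (simp add: color_weight_def)
  then have card_le: "card (f ` A) \<le> (\<Sum>c\<in>f ` A. color_weight V f c A)" by simp
  have "card (f ` A) \<noteq> 0" using \<open>finite A\<close> \<open>A \<noteq> {}\<close> by simp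
  show ?thesis
  proof (cases "card A \<noteq> 1 \<and> card (f ` A) = 1")
    case True
    then have "card (f ` A) = 1" by blast
    then obtain c where "f ` A = {c}" by (rule card_1_singletonE)
    with True color_weight_monochromatic_part[OF assms] show ?thesis by simp
  next
    case False
    with card_le \<open>card (f ` A) \<noteq> 0\<close> show ?thesis by auto
  qed
qed

lemma relaxed1_coloring_card_parts_le:
  "2 * card P \<le> 2 * k + card {A \<in> P. card A = 1}"
proof -
  have "finite P" using complete_multipartite_finite_parts[OF finite_V multipartite] .
  have demand: "(\<Sum>A\<in>P. if card A = 1 then 1 else 2) \<le> 2 * k"
  proof -
    have "f ` A = {c. c \<in> f ` V \<and> c \<in> f ` A}" if "A \<in> P" for A
      using complete_multipartite_part_subset[OF multipartite that] by blast
    then have "(\<Sum>A\<in>P. if card A = 1 then 1 else 2) \<le>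
        (\<Sum>A\<in>P. \<Sum>c | c \<in> f ` V \<and> c \<in> f ` A. color_weight V f c A)"
      using color_weight_sum_ge by (intro sum_mono) simp
    also have "\<dots> = (\<Sum>c\<in>f ` V. \<Sum>A | A \<in> P \<and> c \<in> f ` A. color_weight V f c A)"
      using \<open>finite P\<close> finite_V by (intro sum.swap_restrict) simp_all
    also have "\<dots> \<le> (\<Sum>c\<in>f ` V. 2)"
      using color_weight_sum_le by (intro sum_mono)
    also have "\<dots> \<le> 2 * k"
    proof -
      have "f ` V \<subseteq> {1..k}"
        using relaxed1_coloring_in_range[OF coloring] by blast
      then have "card (f ` V) \<le> k"
        using card_mono[of "{1..k}" "f ` V"] by simp
      then show ?thesis by simp
    qed
    finally show ?thesis .
  qed
  with sum_if_one_two_add_card[OF \<open>finite P\<close>, of "\<lambda>A. card A = 1"] show ?thesis by linarith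
qed

end

lemma finite_set_pairing:
  assumes "finite S"
  obtains p :: "'a \<Rightarrow> nat"
  where "p ` S \<subseteq> {..<(card S + 1) div 2}" "\<And>j. card {x \<in> S. p x = j} \<le> 2"
proof -
  obtain h where h: "bij_betw h S {0..<card S}" using ex_bij_betw_finite_nat[OF assms] by blast
  have "h x < card S" if "x \<in> S" for x
    using h that by (auto simp: bij_betw_def)
  then have "(\<lambda>x. h x div 2) ` S \<subseteq> {..<(card S + 1) div 2}"
    by fastforce
  moreover have "card {x \<in> S. h x div 2 = j} \<le> 2" for j
  proof -
    have "inj_on h {x \<in> S. h x div 2 = j}"
      using h by (auto simp: bij_betw_def inj_on_def)
    moreover have "h ` {x \<in> S. h x div 2 = j} \<subseteq> {2 * j, 2 * j + 1}" by auto
    ultimately have "card {x \<in> S. h x div 2 = j} \<le> card {2 * j, 2 * j + 1}"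
      by (intro card_inj_on_le) simp_all
    then show ?thesis by simp
  qed
  ultimately show ?thesis by (rule that)
qed

lemma complete_multipartite_relaxed1_coloringI:
  assumes "finite V" and multipartite: "complete_multipartite V E P"
    and "\<And>v. v \<in> V \<Longrightarrow> f v \<in> {1..k}"
    and classes: "\<And>u. u \<in> V \<Longrightarrow>
      (\<exists>A\<in>P. {v \<in> V. f v = f u} \<subseteq> A) \<or> card {v \<in> V. f v = f u} \<le> 2"
  shows "relaxed1_coloring V E k f"
proof -
  have "v = w" if "u \<in> V" "v \<in> V" "w \<in> V" "E u v" "E u w" "f v = f u" "f w = f u" for u v w
  proof (rule ccontr)
    assume "v \<noteq> w"
    let ?C = "{x \<in> V. f x = f u}"
    obtain A B where "A \<in> P" "B \<in> P" "A \<noteq> B" "u \<in> A" "v \<in> B"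
      using complete_multipartite_adjE[OF multipartite \<open>E u v\<close>] .
    then have "\<not> ?C \<subseteq> D" if "D \<in> P" for D
      using that \<open>u \<in> V\<close> \<open>v \<in> V\<close> \<open>f v = f u\<close> complete_multipartite_part_unique[OF multipartite]
      by blast
    then have "card ?C \<le> 2" using classes[OF \<open>u \<in> V\<close>] by blast
    have "u \<noteq> v" "u \<noteq> w"
      using \<open>E u v\<close> \<open>E u w\<close> complete_multipartite_part_unique[OF multipartite]
      by (auto elim!: complete_multipartite_adjE[OF multipartite])
    then have "card {u, v, w} = 3" using \<open>v \<noteq> w\<close> by simp
    moreover have "card {u, v, w} \<le> card ?C"
      using that \<open>finite V\<close> by (intro card_mono) auto
    ultimately show False using \<open>card ?C \<le> 2\<close> by simp
  qed
  then show ?thesis unfolding relaxed1_coloring_def using assms(3) by blast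
qed

lemma complete_multipartite_relaxed1_coloring_of_parts:
  fixes color :: "'a set \<Rightarrow> nat"
  assumes "finite V" and multipartite: "complete_multipartite V E P"
    and range: "\<And>A. A \<in> P \<Longrightarrow> color A \<in> {1..k}"
    and own_color: "\<And>A B. A \<in> P \<Longrightarrow> B \<in> P \<Longrightarrow> card A \<noteq> 1 \<Longrightarrow> color B = color A \<Longrightarrow> B = A"
    and paired: "\<And>c. card {A \<in> P. card A = 1 \<and> color A = c} \<le> 2"
  shows "relaxed1_coloring V E k (\<lambda>v. color (THE A. A \<in> P \<and> v \<in> A))"
proof -
  define f where "f v = color (THE A. A \<in> P \<and> v \<in> A)" for v
  have f_part: "f v = color A" if "A \<in> P" "v \<in> A" for A v
    unfolding f_def using complete_multipartite_the_part[OF multipartite that] by simp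
  have "relaxed1_coloring V E k f"
  proof (rule complete_multipartite_relaxed1_coloringI[OF assms(1,2)])
    fix v assume "v \<in> V"
    then obtain A where "A \<in> P" "v \<in> A" using complete_multipartite_partE[OF multipartite] by blast
    then show "f v \<in> {1..k}" using f_part range by simp
  next
    fix u assume "u \<in> V"
    then obtain A0 where "A0 \<in> P" "u \<in> A0" using complete_multipartite_partE[OF multipartite] by blast
    have color_class: "{v \<in> V. f v = f u} = \<Union>{A \<in> P. color A = color A0}"
    proof (intro equalityI subsetI)
      fix v assume "v \<in> {v \<in> V. f v = f u}"
      then have "v \<in> V" "f v = f u" by simp_all
      then obtain A where "A \<in> P" "v \<in> A" using complete_multipartite_partE[OF multipartite] by blast
      then have "color A = color A0"
        using f_part \<open>f v = f u\<close> \<open>A0 \<in> P\<close> \<open>u \<in> A0\<close> by metis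
      then show "v \<in> \<Union>{A \<in> P. color A = color A0}" using \<open>A \<in> P\<close> \<open>v \<in> A\<close> by blast
    next
      fix v assume "v \<in> \<Union>{A \<in> P. color A = color A0}"
      then obtain A where "A \<in> P" "color A = color A0" "v \<in> A" by blast
      then show "v \<in> {v \<in> V. f v = f u}"
        using f_part \<open>A0 \<in> P\<close> \<open>u \<in> A0\<close> complete_multipartite_part_subset[OF multipartite]
        by auto
    qed
    show "(\<exists>A\<in>P. {v \<in> V. f v = f u} \<subseteq> A) \<or> card {v \<in> V. f v = f u} \<le> 2"
    proof (cases "card A0 = 1")
      case True
      then have "{A \<in> P. color A = color A0} = {A \<in> P. card A = 1 \<and> color A = color A0}"
        using own_color \<open>A0 \<in> P\<close> by force
      then have "card {v \<in> V. f v = f u} \<le> sum card {A \<in> P. card A = 1 \<and> color A = color A0}"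
        using color_class card_Union_le_sum_card by metis
      also have "\<dots> = card {A \<in> P. card A = 1 \<and> color A = color A0}" by simp
      also have "\<dots> \<le> 2" by (rule paired)
      finally show ?thesis ..
    next
      case False
      then have "{v \<in> V. f v = f u} \<subseteq> A0"
        using color_class own_color[OF \<open>A0 \<in> P\<close> _ False] by blast
      then show ?thesis using \<open>A0 \<in> P\<close> by blast
    qed
  qed
  then show ?thesis unfolding f_def .
qed

lemma complete_multipartite_relaxed1_coloring_exists:
  assumes "finite V" and multipartite: "complete_multipartite V E P"
  shows "\<exists>f. relaxed1_coloring V E
    (card {A \<in> P. card A \<noteq> 1} + (card {A \<in> P. card A = 1} + 1) div 2) f"
proof -
  define N where "N = {A \<in> P. card A \<noteq> 1}"
  define S where "S = {A \<in> P. card A = 1}"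
  have "finite N" "finite S"
    using complete_multipartite_finite_parts[OF assms] unfolding N_def S_def by simp_all
  obtain g where g: "bij_betw g N {0..<card N}" using ex_bij_betw_finite_nat[OF \<open>finite N\<close>] by blast
  obtain p where p: "p ` S \<subseteq> {..<(card S + 1) div 2}" "\<And>j. card {A \<in> S. p A = j} \<le> 2"
    using finite_set_pairing[OF \<open>finite S\<close>] by blast
  have g_less: "g A < card N" if "A \<in> P" "card A \<noteq> 1" for A
    using g that unfolding N_def by (auto simp: bij_betw_def)
  define color where "color A = (if card A = 1 then card N + 1 + p A else g A + 1)" for A
  have "relaxed1_coloring V E (card N + (card S + 1) div 2) (\<lambda>v. color (THE A. A \<in> P \<and> v \<in> A))"
  proof (rule complete_multipartite_relaxed1_coloring_of_parts[OF assms])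
    fix A assume "A \<in> P"
    show "color A \<in> {1..card N + (card S + 1) div 2}"
    proof (cases "card A = 1")
      case True
      then have "p A < (card S + 1) div 2" using p(1) \<open>A \<in> P\<close> unfolding S_def by blast
      then show ?thesis using True by (simp add: color_def)
    next
      case False
      then show ?thesis using g_less[OF \<open>A \<in> P\<close> False] by (simp add: color_def)
    qed
  next
    fix A B assume "A \<in> P" "B \<in> P" "card A \<noteq> 1" "color B = color A"
    then have "card B \<noteq> 1" "g B = g A"
      using g_less[OF \<open>A \<in> P\<close> \<open>card A \<noteq> 1\<close>] by (auto simp: color_def split: if_splits)
    moreover have "A \<in> N" "B \<in> N" using \<open>A \<in> P\<close> \<open>B \<in> P\<close> \<open>card A \<noteq> 1\<close> \<open>card B \<noteq> 1\<close>
      unfolding N_def by simp_all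
    ultimately show "B = A" using g by (auto simp: bij_betw_def inj_on_def)
  next
    fix c
    have "{A \<in> P. card A = 1 \<and> color A = c} \<subseteq> {A \<in> S. p A = c - (card N + 1)}"
      unfolding S_def color_def by auto
    then have "card {A \<in> P. card A = 1 \<and> color A = c} \<le> card {A \<in> S. p A = c - (card N + 1)}"
      using \<open>finite S\<close> by (intro card_mono) simp_all
    also have "\<dots> \<le> 2" by (rule p(2))
    finally show "card {A \<in> P. card A = 1 \<and> color A = c} \<le> 2" .
  qed
  then show ?thesis unfolding N_def S_def by blast
qed

lemma nat_ceiling_half: "nat \<lceil>real r / 2\<rceil> = (r + 1) div 2"
proof -
  have "\<lceil>real r / 2\<rceil> = - (- int r div 2)"
    using ceiling_divide_eq_div[of "int r" 2] by simp
  also have "\<dots> = int ((r + 1) div 2)" by presburger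
  finally show ?thesis by simp
qed

theorem theorem4p3:
  fixes V :: "'a set" and E :: "'a \<Rightarrow> 'a \<Rightarrow> bool" and P :: "'a set set"
    and s r :: nat
  assumes "finite V"
    and "complete_multipartite V E P"
    and "card P = s" and "s \<ge> 2"
    and "card {A\<in>P. card A = 1} = r"
  shows "chi1 V E = s - r + nat \<lceil>real r / 2\<rceil>"
proof -
  have "finite P" using complete_multipartite_finite_parts[OF assms(1,2)] .
  moreover have "{A \<in> P. card A = 1} \<subseteq> P" by blast
  ultimately have "r \<le> s" using card_mono assms(3,5) by metis
  have "{A \<in> P. card A \<noteq> 1} = P - {A \<in> P. card A = 1}" by blast
  then have "card {A \<in> P. card A \<noteq> 1} = s - r"
    using card_Diff_subset \<open>finite P\<close> assms(3,5) by (simp add: card_Diff_subset)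
  show ?thesis
    unfolding chi1_def nat_ceiling_half
  proof (rule Least_equality)
    show "\<exists>f. relaxed1_coloring V E (s - r + (r + 1) div 2) f"
      using complete_multipartite_relaxed1_coloring_exists[OF assms(1,2)]
        \<open>card {A \<in> P. card A \<noteq> 1} = s - r\<close> assms(5) by simp
  next
    fix k assume "\<exists>f. relaxed1_coloring V E k f"
    then obtain f where "relaxed1_coloring V E k f" ..
    then have "2 * s \<le> 2 * k + r"
      using relaxed1_coloring_card_parts_le[OF assms(1,2)] assms(3,5) by simp
    with \<open>r \<le> s\<close> show "s - r + (r + 1) div 2 \<le> k" by presburger
  qed
qed

end
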